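(* Let $\rho,\sigma$ be quantum states, $r\ge0$, $\eta\in(0,1]$, and let $\beta^r(\rho,\sigma)=\sup_{M\in\mathcal M^r}|\operatorname{tr}(M(\rho-\sigma))|$. If $\beta^r(\rho,\sigma)<\eta$, then $D^{r,\eta}_H(\rho\|\sigma)\le-\log\big(1-\beta^r(\rho,\sigma)/\eta\big)$. Furthermore, let $\delta\ge0$ and $|\psi\rangle$ a pure state in a Hilbert space of dimension $d$, with strong complexity $C^\delta_{\mathrm{strong}}(|\psi\rangle)=\inf\{r\ge0:\beta^r(\psi,\pi)\ge1-1/d-\delta\}$, $\pi=\mathbb 1/d$, $\psi=|\psi\rangle\langle\psi|$. If $r<C^\delta_{\mathrm{strong}}(|\psi\rangle)$ and $\eta>1-d^{-1}-\delta$, then with $c=(1-d^{-1}-\delta)/\eta<1$, $$H^{r,\eta}_H(\psi)>\log d-\log\frac1{1-c}.$$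
   Context: All logarithms are natural; POVM effect = operator $0\le Q\le\mathbb 1$. $\{\mathcal M^r\}_{r\ge0}$ is a family of sets of POVM effects on the $d$-dimensional system with $\mathbb 1\in\mathcal M^0$ and $\mathcal M^r\subseteq\mathcal M^{r'}$ for $r\le r'$. Complexity relative entropy: $D^{r,\eta}_H(\rho\|\Gamma)=-\log\inf\{\operatorname{tr}(Q\Gamma)/\operatorname{tr}(Q\rho): Q\in\mathcal M^r,\ \operatorname{tr}(Q\rho)\ge\eta\}$; complexity entropy $H^{r,\eta}_H(\rho)=-D^{r,\eta}_H(\rho\|\mathbb 1)$. *)

theory Defs
  imports "HOL-Analysis.Analysis"
begin

text \<open>Operators on a d-dimensional Hilbert space are complex d x d matrices,
  with d = CARD('n) for a finite index type 'n.\<close>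

definition qform :: "complex^'n^'n \<Rightarrow> complex^'n \<Rightarrow> complex" where
  "qform A v = (\<Sum>i\<in>UNIV. cnj (v$i) * (A *v v)$i)"

text \<open>Positive semidefinite: the form v^* A v is real and nonnegative for all v
  (which in particular forces A to be Hermitian).\<close>
definition psd :: "complex^'n^'n \<Rightarrow> bool" where
  "psd A \<longleftrightarrow> (\<forall>v. Im (qform A v) = 0 \<and> Re (qform A v) \<ge> 0)"

definition povm_effect :: "complex^'n^'n \<Rightarrow> bool" where
  "povm_effect Q \<longleftrightarrow> psd Q \<and> psd (mat 1 - Q)"

definition density :: "complex^'n^'n \<Rightarrow> bool" where
  "density \<rho> \<longleftrightarrow> psd \<rho> \<and> trace \<rho> = 1"

definition proj :: "complex^'n \<Rightarrow> complex^'n^'n" where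
  "proj v = (\<chi> i j. v$i * cnj (v$j))"

definition unit_vec :: "complex^'n \<Rightarrow> bool" where
  "unit_vec v \<longleftrightarrow> (\<Sum>i\<in>UNIV. cmod (v$i) ^ 2) = 1"

definition measurement_family :: "(real \<Rightarrow> (complex^'n^'n) set) \<Rightarrow> bool" where
  "measurement_family M \<longleftrightarrow>
     (\<forall>r\<ge>0. \<forall>Q\<in>M r. povm_effect Q) \<and> mat 1 \<in> M 0 \<and>
     (\<forall>r r'. 0 \<le> r \<and> r \<le> r' \<longrightarrow> M r \<subseteq> M r')"

definition beta :: "(real \<Rightarrow> (complex^'n^'n) set) \<Rightarrow> real \<Rightarrow> complex^'n^'n \<Rightarrow> complex^'n^'n \<Rightarrow> real" where
  "beta M r \<rho> \<sigma> = Sup ((\<lambda>Q. cmod (trace (Q ** (\<rho> - \<sigma>)))) ` M r)"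

definition DH :: "(real \<Rightarrow> (complex^'n^'n) set) \<Rightarrow> real \<Rightarrow> real \<Rightarrow> complex^'n^'n \<Rightarrow> complex^'n^'n \<Rightarrow> ereal" where
  "DH M r \<eta> \<rho> \<Gamma> =
     (let m = Inf {Re (trace (Q ** \<Gamma>)) / Re (trace (Q ** \<rho>)) | Q. Q \<in> M r \<and> Re (trace (Q ** \<rho>)) \<ge> \<eta>}
      in if m = 0 then \<infinity> else ereal (- ln m))"

definition HH :: "(real \<Rightarrow> (complex^'n^'n) set) \<Rightarrow> real \<Rightarrow> real \<Rightarrow> complex^'n^'n \<Rightarrow> ereal" where
  "HH M r \<eta> \<rho> = - DH M r \<eta> \<rho> (mat 1)"

text \<open>Strong complexity inf{r >= 0. beta^r(psi, 1/d) >= 1 - 1/d - delta} (inf of empty = +infinity).\<close>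
definition C_strong :: "(real \<Rightarrow> (complex^'n^'n) set) \<Rightarrow> real \<Rightarrow> complex^'n \<Rightarrow> ereal" where
  "C_strong M \<delta> v =
     (INF r\<in>{r. r \<ge> 0 \<and> beta M r (proj v) (mat (1 / of_nat CARD('n)) :: complex^'n^'n)
                         \<ge> 1 - 1 / real CARD('n) - \<delta>}. ereal r)"

end

theory Submission
  imports Defs
begin

text \<open>
  Every effect \<open>Q\<close> admissible in \<open>D\<^sub>H\<close> (i.e. \<open>tr(Q\<rho>) \<ge> \<eta>\<close>) satisfies
  \<open>tr(Q\<sigma>) \<ge> tr(Q\<rho>) - \<beta>\<close> with \<open>\<beta> = \<beta>\<^sup>r(\<rho>,\<sigma>)\<close>, so \<open>tr(Q\<sigma>)/tr(Q\<rho>) \<ge> 1 - \<beta>/\<eta>\<close> and the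
  \<open>-log\<close> of the infimum of these ratios is at most \<open>-log(1 - \<beta>/\<eta>)\<close>. Since \<open>\<one> = d\<pi>\<close>, the same
  bound for \<open>\<sigma> = \<pi>\<close> gives \<open>tr Q / tr(Q\<psi>) \<ge> d (1 - \<beta>\<^sup>r(\<psi>,\<pi>)/\<eta>)\<close>, and below the strong
  complexity \<open>\<beta>\<^sup>r(\<psi>,\<pi>) < 1 - 1/d - \<delta> = c\<eta>\<close>.
  The only technical point is that \<open>\<beta>\<close> is the supremum of a bounded set: entries of effects and
  of density matrices have modulus at most 2, as for every positive semidefinite matrix whose
  diagonal entries are at most 1.
\<close>

lemma matrix_vector_mult_axis: "A *v axis j x = (\<chi> i. A$i$j * x)"
  by (simp add: vec_eq_iff matrix_vector_mult_def axis_def if_distrib[where f="(*) _"]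
      cong: if_cong)

lemma sum_cnj_axis_mult: "(\<Sum>i\<in>UNIV. cnj (axis a x $ i) * w i) = cnj x * w a"
  by (simp add: axis_def if_distrib[where f=cnj] if_distrib[where f="\<lambda>z. z * _"] cong: if_cong)

lemma qform_axis: "qform A (axis a x) = cnj x * A$a$a * x"
  by (simp add: qform_def matrix_vector_mult_axis sum_cnj_axis_mult mult.assoc)

lemma qform_axis_add_axis:
  "qform A (axis a x + axis b y) =
    cnj x * A$a$a * x + cnj x * A$a$b * y + cnj y * A$b$a * x + cnj y * A$b$b * y"
  by (simp add: qform_def matrix_vector_right_distrib matrix_vector_mult_axis sum.distrib
      ring_distribs sum_cnj_axis_mult mult.assoc)

lemma psd_diag:
  assumes "psd A" shows "Im (A$a$a) = 0 \<and> Re (A$a$a) \<ge> 0"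
proof -
  have "qform A (axis a 1) = A$a$a" by (simp add: qform_axis)
  then show ?thesis using assms unfolding psd_def by metis
qed

lemma psd_offdiag_le:
  assumes "psd A" shows "cmod (A$a$b) \<le> Re (A$a$a) + Re (A$b$b)"
proof -
  have pos: "Im (qform A v) = 0 \<and> Re (qform A v) \<ge> 0" for v
    using assms unfolding psd_def by blast
  have e1: "qform A (axis a 1 + axis b 1) = A$a$a + A$a$b + A$b$a + A$b$b"
    by (simp add: qform_axis_add_axis)
  have e2: "qform A (axis a 1 + axis b (-1)) = A$a$a - A$a$b - A$b$a + A$b$b"
    by (simp add: qform_axis_add_axis)
  have e3: "qform A (axis a 1 + axis b \<i>) = A$a$a + \<i> * A$a$b - \<i> * A$b$a + A$b$b"
    by (simp add: qform_axis_add_axis algebra_simps)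
  have e4: "qform A (axis a 1 + axis b (-\<i>)) = A$a$a - \<i> * A$a$b + \<i> * A$b$a + A$b$b"
    by (simp add: qform_axis_add_axis algebra_simps)
  have "cmod (A$a$b) \<le> \<bar>Re (A$a$b)\<bar> + \<bar>Im (A$a$b)\<bar>" by (rule cmod_le)
  then show ?thesis
    using pos[of "axis a 1 + axis b 1"] pos[of "axis a 1 + axis b (-1)"]
      pos[of "axis a 1 + axis b \<i>"] pos[of "axis a 1 + axis b (-\<i>)"]
      psd_diag[OF assms, of a] psd_diag[OF assms, of b]
    unfolding e1 e2 e3 e4 by simp linarith
qed

lemma psd_entry_le_2:
  assumes "psd A" and "\<And>c. Re (A$c$c) \<le> 1"
  shows "cmod (A$a$b) \<le> 2"
  using psd_offdiag_le[OF assms(1), of a b] assms(2)[of a] assms(2)[of b] by linarith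

lemma povm_effect_entry_le_2:
  assumes "povm_effect Q" shows "cmod (Q$a$b) \<le> 2"
proof (rule psd_entry_le_2)
  show "psd Q" using assms unfolding povm_effect_def by blast
  show "Re (Q$c$c) \<le> 1" for c
    using assms psd_diag[of "mat 1 - Q" c] unfolding povm_effect_def by (simp add: mat_def)
qed

lemma density_entry_le_2:
  assumes "density R" shows "cmod (R$a$b) \<le> 2"
proof (rule psd_entry_le_2)
  show psd: "psd R" using assms unfolding density_def by blast
  show "Re (R$c$c) \<le> 1" for c
  proof -
    have "Re (R$c$c) \<le> (\<Sum>i\<in>UNIV. Re (R$i$i))"
      by (rule member_le_sum) (use psd_diag[OF psd] in auto)
    also have "\<dots> = 1" using assms unfolding density_def trace_def by (simp flip: Re_sum)
    finally show ?thesis .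
  qed
qed

lemma norm_trace_mult_le:
  fixes A B :: "'a::real_normed_div_algebra^'n^'n"
  assumes A: "\<And>i j. norm (A$i$j) \<le> a" and B: "\<And>i j. norm (B$i$j) \<le> b"
  shows "norm (trace (A ** B)) \<le> real CARD('n)^2 * (a * b)"
proof -
  have entry: "norm (A$i$k * B$k$i) \<le> a * b" for i k
    unfolding norm_mult by (rule mult_mono[OF A B order_trans[OF norm_ge_zero A] norm_ge_zero])
  have "norm (trace (A ** B)) = norm (\<Sum>i\<in>UNIV. \<Sum>k\<in>UNIV. A$i$k * B$k$i)"
    by (simp add: trace_def matrix_matrix_mult_def)
  also have "\<dots> \<le> (\<Sum>i\<in>UNIV. \<Sum>k\<in>UNIV. norm (A$i$k * B$k$i))"
    by (intro order_trans[OF norm_sum] sum_mono norm_sum)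
  also have "\<dots> \<le> (\<Sum>i\<in>(UNIV::'n set). \<Sum>k\<in>(UNIV::'n set). a * b)"
    by (intro sum_mono entry)
  finally show ?thesis by (simp add: power2_eq_square)
qed

lemma beta_upper:
  fixes M :: "real \<Rightarrow> (complex^'n^'n) set"
  assumes mf: "measurement_family M" and r: "r \<ge> 0"
    and \<rho>: "density \<rho>" and \<sigma>: "density \<sigma>" and Q: "Q \<in> M r"
  shows "cmod (trace (Q ** (\<rho> - \<sigma>))) \<le> beta M r \<rho> \<sigma>"
  unfolding beta_def
proof (rule cSup_upper)
  show "cmod (trace (Q ** (\<rho> - \<sigma>))) \<in> (\<lambda>Q. cmod (trace (Q ** (\<rho> - \<sigma>)))) ` M r"
    using Q by blast
  have diff: "cmod ((\<rho> - \<sigma>)$i$j) \<le> 4" for i j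
    using norm_triangle_ineq4[of "\<rho>$i$j" "\<sigma>$i$j"]
      density_entry_le_2[OF \<rho>, of i j] density_entry_le_2[OF \<sigma>, of i j] by simp
  have "cmod (trace (P ** (\<rho> - \<sigma>))) \<le> real CARD('n)^2 * (2 * 4)" if "P \<in> M r" for P
  proof (rule norm_trace_mult_le)
    show "cmod (P$i$j) \<le> 2" for i j
      using that mf r povm_effect_entry_le_2 unfolding measurement_family_def by blast
  qed (rule diff)
  then show "bdd_above ((\<lambda>Q. cmod (trace (Q ** (\<rho> - \<sigma>)))) ` M r)"
    by (rule bdd_aboveI2)
qed

lemma beta_nonneg:
  assumes "measurement_family M" "r \<ge> 0" "density \<rho>" "density \<sigma>"
  shows "beta M r \<rho> \<sigma> \<ge> 0"
proof -
  have "mat 1 \<in> M r" using assms(1,2) unfolding measurement_family_def by blast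
  then show ?thesis using beta_upper[OF assms] norm_ge_zero order_trans by blast
qed

lemma qform_mat: "qform (mat k) w = of_real (\<Sum>i\<in>UNIV. cmod (w$i)^2) * k"
  by (simp add: qform_def matrix_vector_mult_def mat_def if_distrib[where f="(*) _"]
      complex_norm_square sum_distrib_left mult_ac del: of_real_power cong: if_cong)

lemma qform_proj: "qform (proj v) w = of_real (cmod (\<Sum>i\<in>UNIV. cnj (w$i) * v$i)^2)"
proof -
  have "qform (proj v) w = (\<Sum>i\<in>UNIV. cnj (w$i) * v$i) * (\<Sum>k\<in>UNIV. w$k * cnj (v$k))"
    unfolding qform_def matrix_vector_mult_def proj_def sum_product
    by (simp add: sum_distrib_left mult_ac)
  also have "\<dots> = of_real (cmod (\<Sum>i\<in>UNIV. cnj (w$i) * v$i)^2)"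
    by (simp add: complex_norm_square mult.commute del: of_real_power)
  finally show ?thesis .
qed

lemma density_proj:
  assumes "unit_vec v" shows "density (proj v)"
proof -
  have "trace (proj v) = of_real (\<Sum>i\<in>UNIV. cmod (v$i)^2)"
    by (simp add: trace_def proj_def complex_norm_square del: of_real_power)
  then show ?thesis using assms unfolding density_def psd_def unit_vec_def qform_proj by simp
qed

lemma density_maximally_mixed: "density (mat (1 / of_nat CARD('n)) :: complex^'n^'n)"
  unfolding density_def psd_def qform_mat by (simp add: trace_def mat_def sum_nonneg)

lemma trace_mult_diff:
  fixes Q A B :: "'a::comm_ring_1^'n^'n"
  shows "trace (Q ** (A - B)) = trace (Q ** A) - trace (Q ** B)"
  by (simp add: trace_def matrix_matrix_mult_def right_diff_distrib sum_subtractf)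

lemma trace_mult_mat: "trace (Q ** mat k) = trace Q * k"
  by (simp add: trace_def matrix_matrix_mult_def mat_def if_distrib[where f="(*) _"]
      sum_distrib_right cong: if_cong)

lemma DH_le_neg_ln:
  assumes "mat 1 \<in> M r" and "Re (trace \<rho>) \<ge> \<eta>" and "L > 0"
    and ratio: "\<And>Q. Q \<in> M r \<Longrightarrow> Re (trace (Q ** \<rho>)) \<ge> \<eta> \<Longrightarrow>
      L \<le> Re (trace (Q ** \<Gamma>)) / Re (trace (Q ** \<rho>))"
  shows "DH M r \<eta> \<rho> \<Gamma> \<le> ereal (- ln L)"
proof -
  define S where "S = {Re (trace (Q ** \<Gamma>)) / Re (trace (Q ** \<rho>)) | Q.
    Q \<in> M r \<and> Re (trace (Q ** \<rho>)) \<ge> \<eta>}"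
  have "S \<noteq> {}" unfolding S_def using assms(1,2) by auto
  then have "L \<le> Inf S" by (rule cInf_greatest) (auto simp: S_def ratio)
  moreover have "DH M r \<eta> \<rho> \<Gamma> = (if Inf S = 0 then \<infinity> else ereal (- ln (Inf S)))"
    unfolding DH_def Let_def S_def ..
  ultimately show ?thesis using \<open>L > 0\<close> by simp
qed

lemma beta_ratio_lower_bound:
  fixes M :: "real \<Rightarrow> (complex^'n^'n) set"
  assumes "measurement_family M" "r \<ge> 0" "density \<rho>" "density \<sigma>" "Q \<in> M r"
    and "\<eta> > 0" and \<eta>: "Re (trace (Q ** \<rho>)) \<ge> \<eta>"
  shows "1 - beta M r \<rho> \<sigma> / \<eta> \<le> Re (trace (Q ** \<sigma>)) / Re (trace (Q ** \<rho>))"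
proof -
  define b where "b = beta M r \<rho> \<sigma>"
  define t where "t = Re (trace (Q ** \<rho>))"
  have "t > 0" "b \<ge> 0"
    using assms beta_nonneg[OF assms(1-4)] unfolding t_def b_def by linarith+
  have "t - Re (trace (Q ** \<sigma>)) \<le> cmod (trace (Q ** (\<rho> - \<sigma>)))"
    unfolding t_def using complex_Re_le_cmod by (metis minus_complex.sel trace_mult_diff)
  also have "\<dots> \<le> b" unfolding b_def by (rule beta_upper[OF assms(1-5)])
  finally have "(t - b) / t \<le> Re (trace (Q ** \<sigma>)) / t"
    using \<open>t > 0\<close> by (simp add: divide_right_mono)
  moreover have "1 - b / \<eta> \<le> (t - b) / t"
    using \<open>t > 0\<close> \<open>b \<ge> 0\<close> \<open>\<eta> > 0\<close> \<eta> unfolding t_def[symmetric]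
    by (simp add: diff_divide_distrib frac_le)
  ultimately show ?thesis unfolding b_def t_def by linarith
qed

lemma DH_le_neg_ln_one_minus_beta:
  fixes M :: "real \<Rightarrow> (complex^'n^'n) set"
  assumes mf: "measurement_family M" and "density \<rho>" "density \<sigma>" and r: "r \<ge> 0"
    and "0 < \<eta>" "\<eta> \<le> 1" and "beta M r \<rho> \<sigma> < \<eta>"
  shows "DH M r \<eta> \<rho> \<sigma> \<le> ereal (- ln (1 - beta M r \<rho> \<sigma> / \<eta>))"
proof (rule DH_le_neg_ln)
  show "mat 1 \<in> M r" using mf r unfolding measurement_family_def by blast
  show "Re (trace \<rho>) \<ge> \<eta>" using assms unfolding density_def by simp
  show "1 - beta M r \<rho> \<sigma> / \<eta> > 0" using assms by simp
qed (rule beta_ratio_lower_bound, use assms in auto)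

lemma beta_lt_of_less_C_strong:
  fixes M :: "real \<Rightarrow> (complex^'n^'n) set" and v :: "complex^'n"
  assumes "ereal r < C_strong M \<delta> v" and "r \<ge> 0"
  shows "beta M r (proj v) (mat (1 / of_nat CARD('n))) < 1 - 1 / real CARD('n) - \<delta>"
proof (rule ccontr)
  assume "\<not> ?thesis"
  then have "C_strong M \<delta> v \<le> ereal r"
    unfolding C_strong_def using \<open>r \<ge> 0\<close> by (intro INF_lower) simp
  then show False using assms(1) by simp
qed

lemma Re_trace_mult_identity:
  fixes Q :: "complex^'n^'n"
  shows "Re (trace (Q ** mat 1)) = real CARD('n) * Re (trace (Q ** mat (1 / of_nat CARD('n))))"
  unfolding trace_mult_mat by simp

lemma DH_identity_le_neg_ln_card_one_minus_beta:
  fixes M :: "real \<Rightarrow> (complex^'n^'n) set"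
  defines "\<pi> \<equiv> mat (1 / of_nat CARD('n)) :: complex^'n^'n"
  assumes mf: "measurement_family M" and \<rho>: "density \<rho>" and r: "r \<ge> 0"
    and \<eta>: "0 < \<eta>" "\<eta> \<le> 1" and "beta M r \<rho> \<pi> < \<eta>"
  shows "DH M r \<eta> \<rho> (mat 1) \<le> ereal (- ln (real CARD('n) * (1 - beta M r \<rho> \<pi> / \<eta>)))"
proof (rule DH_le_neg_ln)
  show "mat 1 \<in> M r" using mf r unfolding measurement_family_def by blast
  show "Re (trace \<rho>) \<ge> \<eta>" using \<rho> \<eta> unfolding density_def by simp
  show "real CARD('n) * (1 - beta M r \<rho> \<pi> / \<eta>) > 0" using assms by simp
next
  fix Q assume Q: "Q \<in> M r" "Re (trace (Q ** \<rho>)) \<ge> \<eta>"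
  have lower: "1 - beta M r \<rho> \<pi> / \<eta> \<le> Re (trace (Q ** \<pi>)) / Re (trace (Q ** \<rho>))"
    unfolding \<pi>_def
    by (rule beta_ratio_lower_bound[OF mf r \<rho> density_maximally_mixed Q(1) \<eta>(1) Q(2)])
  show "real CARD('n) * (1 - beta M r \<rho> \<pi> / \<eta>) \<le>
      Re (trace (Q ** mat 1)) / Re (trace (Q ** \<rho>))"
    unfolding Re_trace_mult_identity times_divide_eq_right[symmetric] \<pi>_def[symmetric]
    using lower by (intro mult_left_mono) auto
qed

lemma HH_gt_of_less_C_strong:
  fixes M :: "real \<Rightarrow> (complex^'n^'n) set" and v :: "complex^'n"
  assumes mf: "measurement_family M" and v: "unit_vec v" and r: "r \<ge> 0"
    and \<eta>: "0 < \<eta>" "\<eta> \<le> 1" and C: "ereal r < C_strong M \<delta> v"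
    and c: "c = (1 - 1 / real CARD('n) - \<delta>) / \<eta>" "c < 1"
  shows "HH M r \<eta> (proj v) > ereal (ln (real CARD('n)) - ln (1 / (1 - c)))"
proof -
  define d where "d = real CARD('n)"
  define b where "b = beta M r (proj v) (mat (1 / of_nat CARD('n)))"
  have "d > 0" unfolding d_def by simp
  have "b / \<eta> < c"
    using beta_lt_of_less_C_strong[OF C r] \<eta> c(1) unfolding b_def
    by (simp add: divide_strict_right_mono)
  then have less: "d * (1 - c) < d * (1 - b / \<eta>)" using \<open>d > 0\<close> by simp
  have "b < c * \<eta>" using \<open>b / \<eta> < c\<close> \<eta>(1) by (simp add: divide_less_eq)
  also have "\<dots> < \<eta>" using c(2) \<eta>(1) by simp
  finally have "b < \<eta>" .
  have pos: "d * (1 - c) > 0" using c(2) \<open>d > 0\<close> by simp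
  have "ln d - ln (1 / (1 - c)) = ln (d * (1 - c))"
    using c(2) \<open>d > 0\<close> by (simp add: ln_mult ln_div)
  also have "\<dots> < ln (d * (1 - b / \<eta>))"
    using less pos by simp
  finally have "ereal (ln d - ln (1 / (1 - c))) < ereal (ln (d * (1 - b / \<eta>)))" by simp
  also have "\<dots> \<le> HH M r \<eta> (proj v)"
    using DH_identity_le_neg_ln_card_one_minus_beta
        [OF mf density_proj[OF v] r \<eta> \<open>b < \<eta>\<close>[unfolded b_def]]
    unfolding HH_def b_def d_def
    by (metis ereal_minus_le_minus uminus_ereal.simps(1) ereal_uminus_uminus)
  finally show ?thesis unfolding d_def .
qed

theorem propositionD14:
  fixes M :: "real \<Rightarrow> (complex^'n^'n) set"
  assumes "measurement_family M"
  shows "(\<forall>\<rho> \<sigma> r \<eta>. density \<rho> \<and> density \<sigma> \<and> r \<ge> 0 \<and> 0 < \<eta> \<and> \<eta> \<le> 1 \<and> beta M r \<rho> \<sigma> < \<eta> \<longrightarrow>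
            DH M r \<eta> \<rho> \<sigma> \<le> ereal (- ln (1 - beta M r \<rho> \<sigma> / \<eta>)))
       \<and> (\<forall>(v::complex^'n) \<delta> r \<eta>. unit_vec v \<and> \<delta> \<ge> 0 \<and> r \<ge> 0 \<and> 0 < \<eta> \<and> \<eta> \<le> 1 \<and>
            ereal r < C_strong M \<delta> v \<and> \<eta> > 1 - 1 / real CARD('n) - \<delta> \<longrightarrow>
            (let c = (1 - 1 / real CARD('n) - \<delta>) / \<eta> in
               c < 1 \<and> HH M r \<eta> (proj v) > ereal (ln (real CARD('n)) - ln (1 / (1 - c)))))"
proof (intro conjI allI impI)
  fix \<rho> \<sigma> r \<eta>
  assume "density \<rho> \<and> density \<sigma> \<and> r \<ge> 0 \<and> 0 < \<eta> \<and> \<eta> \<le> 1 \<and> beta M r \<rho> \<sigma> < \<eta>"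
  then show "DH M r \<eta> \<rho> \<sigma> \<le> ereal (- ln (1 - beta M r \<rho> \<sigma> / \<eta>))"
    using DH_le_neg_ln_one_minus_beta[OF assms] by blast
next
  fix v :: "complex^'n" and \<delta> r \<eta> :: real
  assume hyps: "unit_vec v \<and> \<delta> \<ge> 0 \<and> r \<ge> 0 \<and> 0 < \<eta> \<and> \<eta> \<le> 1 \<and>
    ereal r < C_strong M \<delta> v \<and> \<eta> > 1 - 1 / real CARD('n) - \<delta>"
  define c where "c = (1 - 1 / real CARD('n) - \<delta>) / \<eta>"
  have "c < 1" using hyps unfolding c_def by (simp add: field_simps)
  then show "let c = (1 - 1 / real CARD('n) - \<delta>) / \<eta> in
      c < 1 \<and> HH M r \<eta> (proj v) > ereal (ln (real CARD('n)) - ln (1 / (1 - c)))"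
    using HH_gt_of_less_C_strong[OF assms _ _ _ _ _ c_def] hyps unfolding Let_def c_def[symmetric]
    by blast
qed

end
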